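(* Let $k_0\in\mathbb{R}\setminus\{0\}$ and let $z\in C^2([-1,1])$ be a complex-valued function with $z(x)\neq0$ for all $x\in[-1,1]$ satisfying $$z(\pm1)=1,\qquad z'(\pm1)=\pm ik_0,\qquad \int_{-1}^{1}z^2(x)\,dx=\frac{1}{ik_0}.$$ Define $U(x)=\dfrac{z''(x)+k_0^2z(x)}{z(x)}$ for $|x|<1$ and $U(x)=0$ for $|x|\ge1$, and let $\psi(x)=z(x)$ for $|x|\le 1$, $\psi(x)=e^{ik_0(|x|-1)}$ for $|x|\ge1$. Then $\psi$ is a nontrivial solution of $-\psi''+U\psi=k_0^2\psi$ on $|x|<1$ with $\psi=\alpha_\pm e^{ik_0|x|}$ for $\pm x\ge1$ (here $\alpha_\pm=e^{-ik_0}$), and there exist constants $\beta_\pm\in\mathbb{C}$ and $\phi\in C^1(\mathbb{R})$ with $$-\phi''+U(x)\phi-k_0^2\phi=2k_0\psi\quad(|x|<1),\qquad \phi(x)=\big(i\alpha_\pm|x|+\beta_\pm\big)e^{ik_0|x|}\quad(\pm x\ge1).$$ That is, $U$ has a spectral singularity of the second order at $k=k_0$.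
   Context: A spectral singularity at real $k_0\neq0$ of $-\frac{d^2}{dx^2}+U(x)$ (with $U$ vanishing outside $[-1,1]$) means that $-\psi''+U\psi=k_0^2\psi$, $\psi=\alpha_\pm e^{ik_0|x|}$ for $\pm x\ge1$, has a nontrivial $C^1$ solution; it is of the second order when, in addition, the inhomogeneous problem for $\phi$ stated in the claim has a $C^1(\mathbb{R})$ solution. *)

theory Defs
  imports "HOL-Analysis.Analysis"
begin

definition spectral_singularity_solution ::
  "(real \<Rightarrow> complex) \<Rightarrow> real \<Rightarrow> (real \<Rightarrow> complex) \<Rightarrow> complex \<Rightarrow> complex \<Rightarrow> bool" where
  "spectral_singularity_solution U k0 \<psi> ap am \<longleftrightarrow>
     (\<exists>\<psi>1 \<psi>2.
        (\<forall>x. (\<psi> has_vector_derivative \<psi>1 x) (at x)) \<and> continuous_on UNIV \<psi>1 \<and>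
        (\<forall>x\<in>{-1<..<1}. (\<psi>1 has_vector_derivative \<psi>2 x) (at x) \<and>
            - \<psi>2 x + U x * \<psi> x = (complex_of_real k0)^2 * \<psi> x) \<and>
        (\<forall>x\<ge>1. \<psi> x = ap * exp (\<i> * complex_of_real k0 * complex_of_real \<bar>x\<bar>)) \<and>
        (\<forall>x\<le>-1. \<psi> x = am * exp (\<i> * complex_of_real k0 * complex_of_real \<bar>x\<bar>))) \<and>
     (\<exists>x. \<psi> x \<noteq> 0)"

definition second_order_condition ::
  "(real \<Rightarrow> complex) \<Rightarrow> real \<Rightarrow> (real \<Rightarrow> complex) \<Rightarrow> complex \<Rightarrow> complex \<Rightarrow> bool" where
  "second_order_condition U k0 \<psi> ap am \<longleftrightarrow>
     (\<exists>bp bm \<phi> \<phi>1 \<phi>2.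
        (\<forall>x. (\<phi> has_vector_derivative \<phi>1 x) (at x)) \<and> continuous_on UNIV \<phi>1 \<and>
        (\<forall>x\<in>{-1<..<1}. (\<phi>1 has_vector_derivative \<phi>2 x) (at x) \<and>
            - \<phi>2 x + U x * \<phi> x - (complex_of_real k0)^2 * \<phi> x
              = 2 * complex_of_real k0 * \<psi> x) \<and>
        (\<forall>x\<ge>1. \<phi> x = (\<i> * ap * complex_of_real \<bar>x\<bar> + bp)
                       * exp (\<i> * complex_of_real k0 * complex_of_real \<bar>x\<bar>)) \<and>
        (\<forall>x\<le>-1. \<phi> x = (\<i> * am * complex_of_real \<bar>x\<bar> + bm)
                       * exp (\<i> * complex_of_real k0 * complex_of_real \<bar>x\<bar>)))"

end

theory Submission
  imports Defs
begin

text \<open>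
  On the exterior, \<psi> is the outgoing wave \<alpha> e^{i k0 |x|} with \<alpha> = e^{-i k0}; the boundary
  data z(\<plusminus>1) = 1, z'(\<plusminus>1) = \<plusminus>i k0 are exactly what makes the glued function C^1.
  The second function \<phi> comes from reduction of order: \<phi> = z w with w' = G / z^2,
  G' = -2 k0 z^2 and G(-1) = -i, so that \<phi>'' = (z''/z) \<phi> - 2 k0 z and \<phi>' = z' w + G / z.
  Then \<phi>(-1) = 0 and \<phi>'(-1) = -i match (i \<alpha> |x| + \<beta>_-) e^{i k0 |x|} at -1 with
  \<beta>_- = -i \<alpha>, while matching at 1 is possible precisely when G(1) = i, which is the
  normalisation \<integral> z^2 = 1 / (i k0).
\<close>

definition glue3 :: "real \<Rightarrow> real \<Rightarrow> (real \<Rightarrow> 'a) \<Rightarrow> (real \<Rightarrow> 'a) \<Rightarrow> (real \<Rightarrow> 'a) \<Rightarrow> real \<Rightarrow> 'a"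
  where "glue3 a b l m r x = (if x \<le> a then l x else if x \<le> b then m x else r x)"

lemma glue3_left: "x \<le> a \<Longrightarrow> glue3 a b l m r x = l x"
  by (simp add: glue3_def)

lemma glue3_middle: "a < x \<Longrightarrow> x \<le> b \<Longrightarrow> glue3 a b l m r x = m x"
  by (simp add: glue3_def)

lemma glue3_right: "a < b \<Longrightarrow> m b = r b \<Longrightarrow> b \<le> x \<Longrightarrow> glue3 a b l m r x = r x"
  by (cases "x = b") (auto simp: glue3_def)

lemma has_vector_derivative_glue3:
  fixes l m r :: "real \<Rightarrow> 'a::real_normed_vector"
  assumes "a < b"
    and l: "\<And>x. (l has_vector_derivative l' x) (at x)"
    and r: "\<And>x. (r has_vector_derivative r' x) (at x)"
    and m: "\<And>x. x \<in> {a..b} \<Longrightarrow> (m has_vector_derivative m' x) (at x within {a..b})"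
    and "l a = m a" "l' a = m' a" "m b = r b" "m' b = r' b"
  shows "(glue3 a b l m r has_vector_derivative glue3 a b l' m' r' x) (at x)"
proof -
  have lm: "((\<lambda>x. if x \<in> {..a} then l x else m x) has_vector_derivative
              (if y \<in> {..a} then l' y else m' y)) (at y within {..b})" if "y \<le> b" for y
  proof (rule has_vector_derivative_If_within_closures[where T = "{a<..b}"])
    have cl: "closure {..a} = {..a}" "closure {a<..b} = {a..b}"
      "{..a} \<union> ({..a} \<inter> {a..b}) = {..a}" "{a<..b} \<union> ({..a} \<inter> {a..b}) = {a..b}"
      using \<open>a < b\<close> by auto
    show "(l has_vector_derivative l' y) (at y within {..a} \<union> (closure {..a} \<inter> closure {a<..b}))"
      unfolding cl using l by (rule has_vector_derivative_at_within)
    show "y \<in> {a<..b} \<union> (closure {..a} \<inter> closure {a<..b}) \<Longrightarrow>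
        (m has_vector_derivative m' y) (at y within {a<..b} \<union> (closure {..a} \<inter> closure {a<..b}))"
      unfolding cl using m by blast
  qed (use that assms(5,6) \<open>a < b\<close> in auto)
  have deriv: "((\<lambda>x. if x \<in> {..b} then (if x \<in> {..a} then l x else m x) else r x) has_vector_derivative
          (if x \<in> {..b} then (if x \<in> {..a} then l' x else m' x) else r' x)) (at x within UNIV)"
  proof (rule has_vector_derivative_If_within_closures[where T = "{b<..}"])
    have cl: "closure {..b} = {..b}" "closure {b<..} = {b..}"
      "{..b} \<union> ({..b} \<inter> {b..}) = {..b}" "{b<..} \<union> ({..b} \<inter> {b..}) = {b..}"
      by auto
    show "x \<in> {..b} \<union> (closure {..b} \<inter> closure {b<..}) \<Longrightarrow>
        ((\<lambda>x. if x \<in> {..a} then l x else m x) has_vector_derivative (if x \<in> {..a} then l' x else m' x))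
          (at x within {..b} \<union> (closure {..b} \<inter> closure {b<..}))"
      unfolding cl using lm by simp
    show "(r has_vector_derivative r' x) (at x within {b<..} \<union> (closure {..b} \<inter> closure {b<..}))"
      unfolding cl using r by (rule has_vector_derivative_at_within)
  qed (use assms(7,8) \<open>a < b\<close> in auto)
  have glue: "glue3 a b f g h = (\<lambda>x. if x \<in> {..b} then (if x \<in> {..a} then f x else g x) else h x)"
    for f g h :: "real \<Rightarrow> 'a"
    using \<open>a < b\<close> by (auto simp: glue3_def fun_eq_iff)
  show ?thesis
    using deriv by (simp only: glue)
qed

lemma continuous_on_glue3:
  fixes l m r :: "real \<Rightarrow> 'a::topological_space"
  assumes "a \<le> b" "continuous_on UNIV l" "continuous_on {a..b} m" "continuous_on UNIV r"
    and "l a = m a" "m b = r b"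
  shows "continuous_on UNIV (glue3 a b l m r)"
proof -
  have "continuous_on ({a..b} \<union> {b..}) (\<lambda>x. if x \<le> b then m x else r x)"
    by (rule continuous_on_cases) (use assms continuous_on_subset in auto)
  moreover have "{a..b} \<union> {b..} = {a..}"
    using \<open>a \<le> b\<close> by auto
  ultimately have mr: "continuous_on {a..} (\<lambda>x. if x \<le> b then m x else r x)"
    by simp
  have "continuous_on ({..a} \<union> {a..}) (glue3 a b l m r)"
    unfolding glue3_def by (rule continuous_on_cases) (use assms mr continuous_on_subset in auto)
  moreover have "{..a} \<union> {a..} = (UNIV :: real set)"
    by auto
  ultimately show ?thesis
    by simp
qed

lemma has_vector_derivative_glue3_interior:
  assumes "x \<in> {a<..<b}" "(m has_vector_derivative m') (at x within {a..b})"
  shows "(glue3 a b l m r has_vector_derivative m') (at x)"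
proof -
  have "(m has_vector_derivative m') (at x)"
    using assms at_within_interior[of x "{a..b}"] by simp
  then show ?thesis
    by (rule has_vector_derivative_transform_within_open[where S = "{a<..<b}"])
      (use assms(1) in \<open>auto simp: glue3_def\<close>)
qed

definition lin_exp :: "complex \<Rightarrow> complex \<Rightarrow> complex \<Rightarrow> real \<Rightarrow> complex"
  where "lin_exp c d a x = (c * of_real x + d) * exp (a * of_real x)"

lemma has_vector_derivative_lin_exp:
  "(lin_exp c d a has_vector_derivative lin_exp (a * c) (c + a * d) a x) (at x)"
  unfolding lin_exp_def
  by (rule has_vector_derivative_real_field) (auto intro!: derivative_eq_intros simp: algebra_simps)

lemma continuous_on_lin_exp: "continuous_on S (lin_exp c d a)"
  unfolding lin_exp_def by (intro continuous_intros)

lemma has_vector_derivative_inverse: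
  fixes f :: "real \<Rightarrow> 'a::real_normed_field"
  assumes "(f has_vector_derivative f') (at x within S)" "f x \<noteq> 0"
  shows "((\<lambda>x. inverse (f x)) has_vector_derivative - (f' / f x ^ 2)) (at x within S)"
proof -
  have "((inverse \<circ> f) has_vector_derivative f' * - (inverse (f x) ^ Suc (Suc 0))) (at x within S)"
    by (rule field_vector_diff_chain_within[OF assms(1) DERIV_inverse[OF assms(2)]])
  then show ?thesis
    by (simp add: o_def power2_eq_square divide_inverse)
qed

lemma reduction_of_order:
  fixes z z1 z2 f :: "real \<Rightarrow> 'a::{real_normed_field,banach}"
  assumes "a \<le> b"
    and dz: "\<And>x. x \<in> {a..b} \<Longrightarrow> (z has_vector_derivative z1 x) (at x within {a..b})"
    and dz1: "\<And>x. x \<in> {a..b} \<Longrightarrow> (z1 has_vector_derivative z2 x) (at x within {a..b})"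
    and nz: "\<And>x. x \<in> {a..b} \<Longrightarrow> z x \<noteq> 0"
    and f: "continuous_on {a..b} f"
  obtains \<phi> \<phi>1 w where
    "\<And>x. x \<in> {a..b} \<Longrightarrow> (\<phi> has_vector_derivative \<phi>1 x) (at x within {a..b})"
    "\<And>x. x \<in> {a..b} \<Longrightarrow> (\<phi>1 has_vector_derivative z2 x / z x * \<phi> x + f x) (at x within {a..b})"
    "\<phi> a = 0" "\<phi>1 a = p0" "\<phi> b = z b * w"
    "\<phi>1 b = z1 b * w + (p0 * z a + integral {a..b} (\<lambda>t. z t * f t)) / z b"
proof -
  have zc: "continuous_on {a..b} z"
    using dz by (rule continuous_on_vector_derivative)
  define G where "G x = p0 * z a + integral {a..x} (\<lambda>t. z t * f t)" for x
  have dG: "(G has_vector_derivative z x * f x) (at x within {a..b})" if "x \<in> {a..b}" for x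
    unfolding G_def using zc f that
    by (auto intro!: derivative_eq_intros integral_has_vector_derivative continuous_intros)
  have "continuous_on {a..b} (\<lambda>x. G x / z x ^ 2)"
    using continuous_on_vector_derivative[OF dG] zc nz by (intro continuous_intros) auto
  then have dw: "((\<lambda>x. integral {a..x} (\<lambda>t. G t / z t ^ 2)) has_vector_derivative G x / z x ^ 2)
      (at x within {a..b})" if "x \<in> {a..b}" for x
    using that by (rule integral_has_vector_derivative)
  define w where "w x = integral {a..x} (\<lambda>t. G t / z t ^ 2)" for x
  define \<phi>1 where "\<phi>1 x = z1 x * w x + G x * inverse (z x)" for x
  show ?thesis
  proof
    fix x assume x: "x \<in> {a..b}"
    show "((\<lambda>x. z x * w x) has_vector_derivative \<phi>1 x) (at x within {a..b})"
      unfolding w_def using dz[OF x] dw[OF x] nz[OF x]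
      by (auto intro!: derivative_eq_intros simp: \<phi>1_def w_def field_simps power2_eq_square)
    have "(\<phi>1 has_vector_derivative (z1 x * (G x / z x ^ 2) + z2 x * w x)
        + (G x * - (z1 x / z x ^ 2) + z x * f x * inverse (z x))) (at x within {a..b})"
      unfolding \<phi>1_def w_def
      by (intro has_vector_derivative_add has_vector_derivative_mult has_vector_derivative_inverse
          dz dz1 dw dG nz x)
    then show "(\<phi>1 has_vector_derivative z2 x / z x * (z x * w x) + f x) (at x within {a..b})"
      by (rule has_vector_derivative_eq_rhs) (use nz[OF x] in \<open>simp add: field_simps power2_eq_square\<close>)
  next
    show "z a * w a = 0" "\<phi>1 a = p0"
      using nz[of a] \<open>a \<le> b\<close> by (simp_all add: w_def \<phi>1_def G_def)
    show "z b * w b = z b * w b" ..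
    show "\<phi>1 b = z1 b * w b + (p0 * z a + integral {a..b} (\<lambda>t. z t * f t)) / z b"
      by (simp add: \<phi>1_def G_def divide_inverse)
  qed
qed

lemma spectral_singularity_solution_profile:
  fixes k0 :: real and z z1 z2 U :: "real \<Rightarrow> complex"
  defines "\<alpha> \<equiv> exp (- \<i> * of_real k0)"
  assumes dz: "\<And>x. x \<in> {-1..1} \<Longrightarrow> (z has_vector_derivative z1 x) (at x within {-1..1})"
    and dz1: "\<And>x. x \<in> {-1..1} \<Longrightarrow> (z1 has_vector_derivative z2 x) (at x within {-1..1})"
    and zp: "z 1 = 1" and zm: "z (-1) = 1"
    and z1p: "z1 1 = \<i> * of_real k0" and z1m: "z1 (-1) = - \<i> * of_real k0"
    and U: "\<And>x. x \<in> {-1<..<1} \<Longrightarrow> U x * z x = z2 x + (of_real k0)^2 * z x"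
  shows "spectral_singularity_solution U k0
           (glue3 (-1) 1 (lin_exp 0 \<alpha> (- \<i> * of_real k0)) z (lin_exp 0 \<alpha> (\<i> * of_real k0))) \<alpha> \<alpha>"
proof -
  let ?K = "complex_of_real k0"
  let ?\<psi> = "glue3 (-1) 1 (lin_exp 0 \<alpha> (- \<i> * ?K)) z (lin_exp 0 \<alpha> (\<i> * ?K))"
  let ?\<psi>1 = "glue3 (-1) 1 (lin_exp 0 (- \<i> * ?K * \<alpha>) (- \<i> * ?K)) z1 (lin_exp 0 (\<i> * ?K * \<alpha>) (\<i> * ?K))"
  have \<alpha>: "\<alpha> * exp (\<i> * ?K) = 1"
    by (simp add: \<alpha>_def flip: exp_add)
  have match: "lin_exp 0 \<alpha> (- \<i> * ?K) (-1) = z (-1)" "z 1 = lin_exp 0 \<alpha> (\<i> * ?K) 1"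
    "lin_exp 0 (- \<i> * ?K * \<alpha>) (- \<i> * ?K) (-1) = z1 (-1)" "z1 1 = lin_exp 0 (\<i> * ?K * \<alpha>) (\<i> * ?K) 1"
    using zp zm z1p z1m \<alpha> by (simp_all add: lin_exp_def)
  have dz1_cont: "continuous_on {-1..1} z1"
    using dz1 by (rule continuous_on_vector_derivative)
  show ?thesis
    unfolding spectral_singularity_solution_def
  proof (intro conjI exI ballI allI impI)
    fix x :: real
    show "(?\<psi> has_vector_derivative ?\<psi>1 x) (at x)"
      using match
      by (intro has_vector_derivative_glue3 dz has_vector_derivative_lin_exp[of 0 \<alpha>, simplified]) auto
    show "continuous_on UNIV ?\<psi>1"
      using match by (intro continuous_on_glue3 continuous_on_lin_exp dz1_cont) auto
  next
    fix x :: real assume x: "x \<in> {-1<..<1}"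
    show "(?\<psi>1 has_vector_derivative z2 x) (at x)"
      using x dz1[of x] by (intro has_vector_derivative_glue3_interior) auto
    show "- z2 x + U x * ?\<psi> x = ?K^2 * ?\<psi> x"
      using x U[OF x] by (simp add: glue3_middle)
  next
    fix x :: real assume "1 \<le> x"
    then show "?\<psi> x = \<alpha> * exp (\<i> * ?K * of_real \<bar>x\<bar>)"
      using match by (simp add: glue3_right lin_exp_def)
  next
    fix x :: real assume "x \<le> -1"
    then show "?\<psi> x = \<alpha> * exp (\<i> * ?K * of_real \<bar>x\<bar>)"
      by (simp add: glue3_left lin_exp_def)
  next
    show "?\<psi> 1 \<noteq> 0"
      using match zp by (simp add: glue3_right)
  qed
qed

lemma second_order_condition_profile:
  fixes k0 :: real and z z1 z2 U :: "real \<Rightarrow> complex"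
  defines "\<alpha> \<equiv> exp (- \<i> * of_real k0)"
  assumes "k0 \<noteq> 0"
    and dz: "\<And>x. x \<in> {-1..1} \<Longrightarrow> (z has_vector_derivative z1 x) (at x within {-1..1})"
    and dz1: "\<And>x. x \<in> {-1..1} \<Longrightarrow> (z1 has_vector_derivative z2 x) (at x within {-1..1})"
    and nz: "\<And>x. x \<in> {-1..1} \<Longrightarrow> z x \<noteq> 0"
    and zp: "z 1 = 1" and zm: "z (-1) = 1" and z1p: "z1 1 = \<i> * of_real k0"
    and int: "integral {-1..1} (\<lambda>x. (z x)^2) = 1 / (\<i> * of_real k0)"
    and U: "\<And>x. x \<in> {-1<..<1} \<Longrightarrow> U x * z x = z2 x + (of_real k0)^2 * z x"
  shows "second_order_condition U k0
           (glue3 (-1) 1 (lin_exp 0 \<alpha> (- \<i> * of_real k0)) z (lin_exp 0 \<alpha> (\<i> * of_real k0))) \<alpha> \<alpha>"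
proof -
  let ?K = "complex_of_real k0"
  let ?\<psi> = "glue3 (-1) 1 (lin_exp 0 \<alpha> (- \<i> * ?K)) z (lin_exp 0 \<alpha> (\<i> * ?K))"
  have "continuous_on {-1..1} (\<lambda>x. - 2 * ?K * z x)"
    using continuous_on_vector_derivative[OF dz] by (intro continuous_intros)
  from reduction_of_order[OF _ dz dz1 nz this, of "- \<i>"]
  obtain \<phi> \<phi>1 W where
    d\<phi>: "\<And>x. x \<in> {-1..1} \<Longrightarrow> (\<phi> has_vector_derivative \<phi>1 x) (at x within {-1..1})" and
    d\<phi>1: "\<And>x. x \<in> {-1..1} \<Longrightarrow>
      (\<phi>1 has_vector_derivative z2 x / z x * \<phi> x + - 2 * ?K * z x) (at x within {-1..1})" and
    \<phi>_left: "\<phi> (-1) = 0" and \<phi>1_left: "\<phi>1 (-1) = - \<i>" and \<phi>_right: "\<phi> 1 = z 1 * W" and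
    \<phi>1_right: "\<phi>1 1 = z1 1 * W + (- \<i> * z (-1) + integral {-1..1} (\<lambda>t. z t * (- 2 * ?K * z t))) / z 1"
    by auto
  have "(\<lambda>t. z t * (- 2 * ?K * z t)) = (\<lambda>t. - 2 * ?K * (z t)^2)"
    by (simp add: fun_eq_iff power2_eq_square)
  then have "integral {-1..1} (\<lambda>t. z t * (- 2 * ?K * z t)) = - 2 * ?K * integral {-1..1} (\<lambda>x. (z x)^2)"
    by simp
  also have "\<dots> = 2 * \<i>"
    using int \<open>k0 \<noteq> 0\<close> by simp
  finally have \<phi>1_right_eq: "\<phi>1 1 = \<i> * ?K * W + \<i>"
    using \<phi>1_right zp zm z1p by simp
  define bp where "bp = (W - \<i>) * \<alpha>"
  define bm where "bm = - \<i> * \<alpha>"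
  let ?\<phi> = "glue3 (-1) 1 (lin_exp (- \<i> * \<alpha>) bm (- \<i> * ?K)) \<phi> (lin_exp (\<i> * \<alpha>) bp (\<i> * ?K))"
  let ?\<phi>1 = "glue3 (-1) 1 (lin_exp ((- \<i> * ?K) * (- \<i> * \<alpha>)) (- \<i> * \<alpha> + (- \<i> * ?K) * bm) (- \<i> * ?K))
    \<phi>1 (lin_exp ((\<i> * ?K) * (\<i> * \<alpha>)) (\<i> * \<alpha> + (\<i> * ?K) * bp) (\<i> * ?K))"
  have \<alpha>: "\<alpha> * exp (\<i> * ?K) = 1"
    by (simp add: \<alpha>_def flip: exp_add)
  have match: "lin_exp (- \<i> * \<alpha>) bm (- \<i> * ?K) (-1) = \<phi> (-1)" "\<phi> 1 = lin_exp (\<i> * \<alpha>) bp (\<i> * ?K) 1"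
    "lin_exp ((- \<i> * ?K) * (- \<i> * \<alpha>)) (- \<i> * \<alpha> + (- \<i> * ?K) * bm) (- \<i> * ?K) (-1) = \<phi>1 (-1)"
    "\<phi>1 1 = lin_exp ((\<i> * ?K) * (\<i> * \<alpha>)) (\<i> * \<alpha> + (\<i> * ?K) * bp) (\<i> * ?K) 1"
    using zp \<phi>_left \<phi>1_left \<phi>_right \<phi>1_right_eq \<alpha>
    by (simp_all add: lin_exp_def bm_def bp_def algebra_simps)
  show ?thesis
    unfolding second_order_condition_def
  proof (intro conjI exI ballI allI impI)
    fix x :: real
    show "(?\<phi> has_vector_derivative ?\<phi>1 x) (at x)"
      using match by (intro has_vector_derivative_glue3 d\<phi> has_vector_derivative_lin_exp) auto
    show "continuous_on UNIV ?\<phi>1"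
      using match continuous_on_vector_derivative[OF d\<phi>1]
      by (intro continuous_on_glue3 continuous_on_lin_exp) auto
  next
    fix x :: real assume x: "x \<in> {-1<..<1}"
    show "(?\<phi>1 has_vector_derivative z2 x / z x * \<phi> x - 2 * ?K * z x) (at x)"
      using x d\<phi>1[of x] by (intro has_vector_derivative_glue3_interior) auto
    show "- (z2 x / z x * \<phi> x - 2 * ?K * z x) + U x * ?\<phi> x - ?K^2 * ?\<phi> x = 2 * ?K * ?\<psi> x"
    proof -
      have "U x = z2 x / z x + ?K^2"
        using U[OF x] nz[of x] x by (simp add: field_simps)
      then show ?thesis
        using x by (simp add: glue3_middle algebra_simps)
    qed
  next
    fix x :: real assume "1 \<le> x"
    then show "?\<phi> x = (\<i> * \<alpha> * of_real \<bar>x\<bar> + bp) * exp (\<i> * ?K * of_real \<bar>x\<bar>)"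
      using match by (simp add: glue3_right lin_exp_def)
  next
    fix x :: real assume "x \<le> -1"
    then show "?\<phi> x = (\<i> * \<alpha> * of_real \<bar>x\<bar> + bm) * exp (\<i> * ?K * of_real \<bar>x\<bar>)"
      by (simp add: glue3_left lin_exp_def)
  qed
qed

theorem mainTheorem3:
  fixes k0 :: real and z z1 z2 :: "real \<Rightarrow> complex"
    and U \<psi> :: "real \<Rightarrow> complex"
  assumes k0: "k0 \<noteq> 0"
    and dz: "\<forall>x\<in>{-1..1}. (z has_vector_derivative z1 x) (at x within {-1..1})"
    and dz1: "\<forall>x\<in>{-1..1}. (z1 has_vector_derivative z2 x) (at x within {-1..1})"
    and cz2: "continuous_on {-1..1} z2"
    and nz: "\<forall>x\<in>{-1..1}. z x \<noteq> 0"
    and zp: "z 1 = 1" and zm: "z (-1) = 1"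
    and z1p: "z1 1 = \<i> * complex_of_real k0" and z1m: "z1 (-1) = - \<i> * complex_of_real k0"
    and int: "integral {-1..1} (\<lambda>x. (z x)^2) = 1 / (\<i> * complex_of_real k0)"
    and U_def: "U \<equiv> (\<lambda>x. if \<bar>x\<bar> < 1
                    then (z2 x + (complex_of_real k0)^2 * z x) / z x else 0)"
    and \<psi>_def: "\<psi> \<equiv> (\<lambda>x. if \<bar>x\<bar> \<le> 1 then z x
                    else exp (\<i> * complex_of_real k0 * complex_of_real (\<bar>x\<bar> - 1)))"
  shows "spectral_singularity_solution U k0 \<psi> (exp (- \<i> * complex_of_real k0))
                                              (exp (- \<i> * complex_of_real k0)) \<and>
         second_order_condition U k0 \<psi> (exp (- \<i> * complex_of_real k0))
                                         (exp (- \<i> * complex_of_real k0))"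
proof -
  let ?K = "complex_of_real k0"
  let ?\<alpha> = "exp (- \<i> * ?K)"
  have \<psi>_glue3: "\<psi> = glue3 (-1) 1 (lin_exp 0 ?\<alpha> (- \<i> * ?K)) z (lin_exp 0 ?\<alpha> (\<i> * ?K))"
  proof
    fix x :: real
    have "\<i> * ?K * of_real (\<bar>x\<bar> - 1) = - \<i> * ?K + \<i> * ?K * of_real \<bar>x\<bar>"
      by (simp add: algebra_simps)
    then have "exp (\<i> * ?K * of_real (\<bar>x\<bar> - 1)) = ?\<alpha> * exp (\<i> * ?K * of_real \<bar>x\<bar>)"
      by (simp only: exp_add)
    moreover have "?\<alpha> * exp (\<i> * ?K) = 1"
      by (simp flip: exp_add)
    ultimately show "\<psi> x = glue3 (-1) 1 (lin_exp 0 ?\<alpha> (- \<i> * ?K)) z (lin_exp 0 ?\<alpha> (\<i> * ?K)) x"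
      using zp zm by (cases "x = -1"; cases "x = 1") (auto simp: \<psi>_def glue3_def lin_exp_def)
  qed
  have U: "U x * z x = z2 x + ?K^2 * z x" if "x \<in> {-1<..<1}" for x
    using that nz by (simp add: U_def abs_less_iff)
  show ?thesis
    unfolding \<psi>_glue3
    using spectral_singularity_solution_profile[OF dz[rule_format] dz1[rule_format] zp zm z1p z1m U]
      second_order_condition_profile[OF k0 dz[rule_format] dz1[rule_format] nz[rule_format] zp zm z1p int U]
    by blast
qed

end
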